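(* Under the standing setting of the context, assume in addition $\beta\in(-2,0)$ and that $f$ is non-constant and does not depend on $\nabla\phi$. Let $\tau\in\mathfrak W_{<0}$. Then $\tau$ has at most one vertex $v$ with noise label $0$, and if such $v$ exists, it has exactly one outgoing edge $e$ whose derivative label $k$ satisfies $|k|_{\mathfrak s}=1$.
   Context: Standing setting. Integers $d\ge2$, $n\ge1$; $E$ a finite-dimensional real normed space; $\beta<0$. Scaling $\mathfrak s=(2,1,\dots,1)$, $|k|_{\mathfrak s}=2k_1+k_2+\dots+k_d$ for $k\in\mathbb N^d$; $\mathbb N^d_{<2}=\{k:|k|_{\mathfrak s}<2\}$. Jets: $\widehat{\mathcal J}=E^{\mathbb N^d}$, elements $\boldsymbol\phi=(\nabla^k\phi)_{k\in\mathbb N^d}$; $\mathcal J=E^{\mathbb N^d_{<2}}$, written $\boldsymbol\phi=(\phi,\nabla\phi)$; functions on $\mathcal J$ are viewed as functions on $\widehat{\mathcal J}$ depending on finitely many components. $P:\mathcal J\to E$ is a polynomial such that for some integer $p\ge2$ and linear $F:E^{\otimes p}\to E$, either $P(\boldsymbol\phi)=F(\phi^{\otimes p})$, or $q=(p-1)/2$ is an integer and $P(\boldsymbol\phi)=F(\phi^{\otimes p})+B(\nabla\phi\otimes\phi^{\otimes q})$ for a linear $B$; $\alpha=2/(p-1)$. $f=(f_1,\dots,f_n):\mathcal J\to L(\mathbb R^n,E)$ is smooth. Subcriticality: if $f$ is constant, $\beta>-\alpha-2$; if $f$ is non-constant but independent of $\nabla\phi$, $\beta>-2$; if $f$ depends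 on $\nabla\phi$, $\beta>-1$. Derivatives: for $\ell\in\mathbb N^d$, $D^\ell g$ is the derivative of $g$ in the $\ell$-th jet component; for a multiset $\mathbf k=\{k_1,\dots,k_r\}$ of elements of $\mathbb N^d$, $D^{\mathbf k}=D^{k_1}\cdots D^{k_r}$, $|\mathbf k|=r$, $|\mathbf k|_{\mathfrak s}=\sum|k_i|_{\mathfrak s}$. Trees: rooted trees with a polynomial label in $\mathbb N^d$ and a noise label in $\{0,\dots,n\}$ on each vertex and a derivative label in $\mathbb N^d$ on each edge, written uniquely (unordered product) as $\tau=X^k\Xi_j\prod_{i=1}^\ell\mathcal I^{k_i}[\tau_i]$: root with polynomial label $k$, noise label $j$, and $\ell$ edges with labels $k_i$ to the roots of subtrees $\tau_i$; $\Xi_0$ is also written $\mathbf 1$. Rules: $\mathfrak R_0=\{\mathbf k: D^{\mathbf k}P\ne0\}$; for $j\ge1$, $\mathfrak R_j=\emptyset$ if $f$ is constant, $\mathfrak R_j=\{\mathbf k:\text{all elements are }0\}$ if $f$ is non-constant and independent of $\nabla\phi$, $\mathfrak R_j=\{\mathbf k:|k|_{\mathfrak s}\le1\ \forall k\in\mathbf k\}$ if $f$ depends on $\nabla\phi$. $\tau$ is conforming if every $\tau_i$ is conforming and $\{k_1,\dots,k_\ell\}\in\mathfrak R_j$ (so every $X^k\Xi_j$ is conforming). Homogeneity: $|\Xi_j|_{\mathfrak s}=\beta$ ($j\ge1$), $|\mathbf 1|_{\mathfrak s}=0$, $|X^k\tau|_{\mathfrak s}=|k|_{\mathfrak s}+|\tau|_{\mathfrak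 s}$, $|\tau\sigma|_{\mathfrak s}=|\tau|_{\mathfrak s}+|\sigma|_{\mathfrak s}$, $|\mathcal I^k[\tau]|_{\mathfrak s}=|\tau|_{\mathfrak s}+2-|k|_{\mathfrak s}$. A leaf is a non-root vertex incident to exactly one edge; it is a polynomial leaf if its noise label is $0$. $\mathfrak W$ is the set of conforming trees with no polynomial leaves, and $\mathfrak W_{<0}=\{\tau\in\mathfrak W:-2<|\tau|_{\mathfrak s}<0\}$. An edge $\{v,w\}$ is outgoing from $v$ if $v$ lies on the path from $w$ to the root. *)

theory Defs
  imports "HOL-Analysis.Analysis" "HOL-Library.Multiset"
begin

text \<open>Multi-indices k in N^d are functions nat => nat supported in {0..<d};
  index 0 is the time coordinate (scaling 2), indices 1..d-1 are space (scaling 1).\<close>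

definition midx :: "nat \<Rightarrow> (nat \<Rightarrow> nat) \<Rightarrow> bool" where
  "midx d k \<longleftrightarrow> (\<forall>i\<ge>d. k i = 0)"

definition sdeg :: "nat \<Rightarrow> (nat \<Rightarrow> nat) \<Rightarrow> nat" where
  "sdeg d k = 2 * k 0 + (\<Sum>i\<in>{1..<d}. k i)"

definition zidx :: "nat \<Rightarrow> nat" where
  "zidx = (\<lambda>_. 0)"

definition uidx :: "nat \<Rightarrow> nat \<Rightarrow> nat" where
  "uidx i = (\<lambda>m. if m = i then 1 else 0)"

text \<open>Full jets: functions from multi-indices to E.  A function on the jet space J
  (components with |k|_s < 2) is a function on full jets depending only on those components.\<close>
type_synonym 'e jet = "(nat \<Rightarrow> nat) \<Rightarrow> 'e"

definition jet_fun :: "nat \<Rightarrow> ('e jet \<Rightarrow> 'b) \<Rightarrow> bool" where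
  "jet_fun d g \<longleftrightarrow> (\<forall>\<phi> \<psi>. (\<forall>k. midx d k \<and> sdeg d k < 2 \<longrightarrow> \<phi> k = \<psi> k) \<longrightarrow> g \<phi> = g \<psi>)"

coinductive smooth :: "('a::real_normed_vector \<Rightarrow> 'b::real_normed_vector) \<Rightarrow> bool" where
  "(\<And>x. (g has_derivative D x) (at x)) \<Longrightarrow> (\<And>h. smooth (\<lambda>x. D x h)) \<Longrightarrow> smooth g"

text \<open>A linear map E^{tensor p} -> E is the same as a p-multilinear map E^p -> E.\<close>
definition multilin :: "nat \<Rightarrow> ((nat \<Rightarrow> 'e::real_vector) \<Rightarrow> 'b::real_vector) \<Rightarrow> bool" where
  "multilin p F \<longleftrightarrow> (\<forall>v w. (\<forall>i<p. v i = w i) \<longrightarrow> F v = F w) \<and>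
     (\<forall>i<p. \<forall>v. linear (\<lambda>x. F (v(i := x))))"

text \<open>B is linear on (grad phi) tensor phi^{tensor q}, where grad phi in E^{d-1}
  is indexed by the spatial directions 1..d-1.\<close>
definition grad_multilin :: "nat \<Rightarrow> nat \<Rightarrow> ((nat \<Rightarrow> 'e::real_vector) \<Rightarrow> (nat \<Rightarrow> 'e) \<Rightarrow> 'e) \<Rightarrow> bool" where
  "grad_multilin d q B \<longleftrightarrow>
     (\<forall>a. multilin q (B a)) \<and>
     (\<forall>v a b. (\<forall>i\<in>{1..<d}. a i = b i) \<longrightarrow> B a v = B b v) \<and>
     (\<forall>v a b. B (\<lambda>i. a i + b i) v = B a v + B b v) \<and>
     (\<forall>v c a. B (\<lambda>i. c *\<^sub>R a i) v = c *\<^sub>R B a v)"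

definition admissible_P :: "nat \<Rightarrow> nat \<Rightarrow> ('e::real_vector jet \<Rightarrow> 'e) \<Rightarrow> bool" where
  "admissible_P d p P \<longleftrightarrow> p \<ge> 2 \<and>
     (\<exists>F. multilin p F \<and>
        ((\<forall>\<phi>. P \<phi> = F (\<lambda>_. \<phi> zidx)) \<or>
         (odd p \<and> (\<exists>B. grad_multilin d ((p - 1) div 2) B \<and>
            (\<forall>\<phi>. P \<phi> = F (\<lambda>_. \<phi> zidx) + B (\<lambda>i. \<phi> (uidx i)) (\<lambda>_. \<phi> zidx))))))"

definition jderiv :: "(nat \<Rightarrow> nat) \<Rightarrow> 'e::real_normed_vector \<Rightarrow> ('e jet \<Rightarrow> 'b::real_normed_vector) \<Rightarrow> 'e jet \<Rightarrow> 'b" where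
  "jderiv l h g \<phi> = vector_derivative (\<lambda>t::real. g (\<phi>(l := \<phi> l + t *\<^sub>R h))) (at 0)"

fun jderivs :: "((nat \<Rightarrow> nat) \<times> 'e::real_normed_vector) list \<Rightarrow> ('e jet \<Rightarrow> 'b::real_normed_vector) \<Rightarrow> 'e jet \<Rightarrow> 'b" where
  "jderivs [] g = g"
| "jderivs ((l, h) # xs) g = jderiv l h (jderivs xs g)"

definition Dk_nonzero :: "((nat \<Rightarrow> nat) multiset) \<Rightarrow> ('e::real_normed_vector jet \<Rightarrow> 'b::real_normed_vector) \<Rightarrow> bool" where
  "Dk_nonzero K g \<longleftrightarrow> (\<exists>xs \<phi>. mset (map fst xs) = K \<and> jderivs xs g \<phi> \<noteq> 0)"

definition f_constant :: "nat \<Rightarrow> (nat \<Rightarrow> 'e jet \<Rightarrow> 'e) \<Rightarrow> bool" where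
  "f_constant n f \<longleftrightarrow> (\<forall>i\<in>{1..n}. \<forall>\<phi> \<psi>. f i \<phi> = f i \<psi>)"

definition f_indep_grad :: "nat \<Rightarrow> (nat \<Rightarrow> 'e jet \<Rightarrow> 'e) \<Rightarrow> bool" where
  "f_indep_grad n f \<longleftrightarrow> (\<forall>i\<in>{1..n}. \<forall>\<phi> \<psi>. \<phi> zidx = \<psi> zidx \<longrightarrow> f i \<phi> = f i \<psi>)"

definition rules :: "nat \<Rightarrow> nat \<Rightarrow> (nat \<Rightarrow> 'e::real_normed_vector jet \<Rightarrow> 'e) \<Rightarrow> ('e jet \<Rightarrow> 'e)
    \<Rightarrow> nat \<Rightarrow> (nat \<Rightarrow> nat) multiset set" where
  "rules d n f P j =
     (if j = 0 then {K. Dk_nonzero K P}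
      else if f_constant n f then {}
      else if f_indep_grad n f then {K. \<forall>k\<in>#K. k = zidx}
      else {K. \<forall>k\<in>#K. sdeg d k \<le> 1})"

text \<open>Node k j ch: root with polynomial label k, noise label j, and the (unordered)
  multiset ch of pairs (edge derivative label, subtree).\<close>
datatype tree = Node "nat \<Rightarrow> nat" nat "((nat \<Rightarrow> nat) \<times> tree) multiset"

inductive conforming :: "nat \<Rightarrow> nat \<Rightarrow> (nat \<Rightarrow> (nat \<Rightarrow> nat) multiset set) \<Rightarrow> tree \<Rightarrow> bool"
  for d n R where
  "midx d k \<Longrightarrow> j \<le> n \<Longrightarrow> (\<forall>x\<in>set_mset ch. midx d (fst x) \<and> conforming d n R (snd x))
   \<Longrightarrow> image_mset fst ch \<in> R j \<Longrightarrow> conforming d n R (Node k j ch)"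

primrec hom :: "nat \<Rightarrow> real \<Rightarrow> tree \<Rightarrow> real" where
  "hom d \<beta> (Node k j ch) = real (sdeg d k) + (if j = 0 then 0 else \<beta>) +
     sum_mset (image_mset (\<lambda>(l, r). r + 2 - real (sdeg d l)) (image_mset (map_prod id (hom d \<beta>)) ch))"

inductive is_vertex :: "tree \<Rightarrow> tree \<Rightarrow> bool" where
  "is_vertex t t"
| "x \<in># ch \<Longrightarrow> is_vertex s (snd x) \<Longrightarrow> is_vertex s (Node k j ch)"

inductive nonroot_vertex :: "tree \<Rightarrow> tree \<Rightarrow> bool" where
  "x \<in># ch \<Longrightarrow> is_vertex s (snd x) \<Longrightarrow> nonroot_vertex s (Node k j ch)"

text \<open>A polynomial leaf is a non-root vertex with noise label 0 and no children
  (a non-root vertex incident to exactly one edge has no outgoing edges).\<close>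
definition no_poly_leaves :: "tree \<Rightarrow> bool" where
  "no_poly_leaves t \<longleftrightarrow> \<not> (\<exists>k. nonroot_vertex (Node k 0 {#}) t)"

primrec count0 :: "tree \<Rightarrow> nat" where
  "count0 (Node k j ch) = (if j = 0 then 1 else 0) + sum_mset (image_mset snd (image_mset (map_prod id count0) ch))"

definition W_neg :: "nat \<Rightarrow> nat \<Rightarrow> (nat \<Rightarrow> 'e::real_normed_vector jet \<Rightarrow> 'e) \<Rightarrow> ('e jet \<Rightarrow> 'e)
    \<Rightarrow> real \<Rightarrow> tree set" where
  "W_neg d n f P \<beta> = {t. conforming d n (rules d n f P) t \<and> no_poly_leaves t \<and>
      -2 < hom d \<beta> t \<and> hom d \<beta> t < 0}"

end

(* Write P as a sum of multilinear forms whose slots read the jet components phi and grad phi.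
   A jet derivative in component l freezes one slot reading l, so D^K P is nonzero only if K is
   contained in the slot labels of one monomial: K consists of zero multi-indices and at most one
   of scaled degree 1.  By induction on the tree, |tau| >= (beta + 2) N + M + Z - 2, where N counts
   noise vertices, M counts label-0 vertices and Z those label-0 vertices without an outgoing edge
   of degree 1.  Having no polynomial leaves forces N >= 1, so |tau| < 0 gives M + Z < -beta < 2. *)

theory Submission
  imports Defs
begin

lemma multilin_has_vector_derivative:
  fixes M :: "(nat \<Rightarrow> 'e::real_normed_vector) \<Rightarrow> 'b::real_normed_vector"
  assumes "multilin r M" and "finite S" and "S \<subseteq> {..<r}"
  shows "((\<lambda>t. M (\<lambda>s. if s \<in> S then w s + t *\<^sub>R h else w s))
           has_vector_derivative (\<Sum>s\<in>S. M (w(s := h)))) (at 0)"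
  using assms(2,3)
proof (induction S arbitrary: w rule: finite_induct)
  case empty
  then show ?case by simp
next
  case (insert x S)
  have lin: "linear (\<lambda>y. M (v(x := y)))" for v
    using assms(1) insert.prems unfolding multilin_def by auto
  define g where "g w' t = M (\<lambda>s. if s \<in> S then w' s + t *\<^sub>R h else w' s)" for w' t
  have decomp: "M (\<lambda>s. if s \<in> insert x S then w s + t *\<^sub>R h else w s) = g w t + t *\<^sub>R g (w(x := h)) t"
    for t
  proof -
    define v where "v = (\<lambda>s. if s \<in> S then w s + t *\<^sub>R h else w s)"
    have "(\<lambda>s. if s \<in> insert x S then w s + t *\<^sub>R h else w s) = v(x := v x + t *\<^sub>R h)"
      using insert.hyps by (auto simp: v_def)
    then have "M (\<lambda>s. if s \<in> insert x S then w s + t *\<^sub>R h else w s) = M v + t *\<^sub>R M (v(x := h))"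
      using linear_add[OF lin[of v]] linear_scale[OF lin[of v]] by simp
    moreover have "v(x := h) = (\<lambda>s. if s \<in> S then (w(x := h)) s + t *\<^sub>R h else (w(x := h)) s)"
      using insert.hyps by (auto simp: v_def)
    ultimately show ?thesis by (simp add: g_def v_def)
  qed
  have "(g w has_vector_derivative (\<Sum>s\<in>S. M (w(s := h)))) (at 0)"
    unfolding g_def by (rule insert.IH) (use insert in auto)
  moreover have "(g (w(x := h)) has_vector_derivative (\<Sum>s\<in>S. M ((w(x := h))(s := h)))) (at 0)"
    unfolding g_def by (rule insert.IH) (use insert in auto)
  then have "((\<lambda>t. t *\<^sub>R g (w(x := h)) t) has_vector_derivative g (w(x := h)) 0) (at 0)"
    using has_vector_derivative_scaleR[of "\<lambda>t. t" 1] by (auto intro: derivative_eq_intros)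
  moreover have "g (w(x := h)) 0 = M (w(x := h))"
    unfolding g_def by (rule arg_cong[where f = M]) auto
  ultimately have "((\<lambda>t. g w t + t *\<^sub>R g (w(x := h)) t) has_vector_derivative
      (\<Sum>s\<in>S. M (w(s := h))) + M (w(x := h))) (at 0)"
    by (metis has_vector_derivative_add)
  then show ?case
    by (simp only: decomp sum.insert[OF insert.hyps] add.commute)
qed

text \<open>Monomial r M c is the r-linear form M whose slot s reads the jet component l if c s = Inl l
  and is frozen to the vector v if c s = Inr v.  Differentiating in the jet component l freezes,
  one at a time, each slot reading l.\<close>

datatype 'e monomial = Monomial nat "(nat \<Rightarrow> 'e) \<Rightarrow> 'e" "nat \<Rightarrow> (nat \<Rightarrow> nat) + 'e"

definition slot_values :: "(nat \<Rightarrow> (nat \<Rightarrow> nat) + 'e) \<Rightarrow> 'e jet \<Rightarrow> nat \<Rightarrow> 'e" where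
  "slot_values c \<phi> s = (case c s of Inl l \<Rightarrow> \<phi> l | Inr v \<Rightarrow> v)"

fun eval_monomial :: "'e monomial \<Rightarrow> 'e jet \<Rightarrow> 'e" where
  "eval_monomial (Monomial r M c) \<phi> = M (slot_values c \<phi>)"

definition eval_poly :: "'e::real_normed_vector monomial list \<Rightarrow> 'e jet \<Rightarrow> 'e" where
  "eval_poly ms \<phi> = (\<Sum>m\<leftarrow>ms. eval_monomial m \<phi>)"

fun multilinear_monomial :: "'e::real_vector monomial \<Rightarrow> bool" where
  "multilinear_monomial (Monomial r M c) \<longleftrightarrow> multilin r M"

fun monomial_vars :: "'e monomial \<Rightarrow> (nat \<Rightarrow> nat) multiset" where
  "monomial_vars (Monomial r M c) = (\<Sum>s<r. case c s of Inl l \<Rightarrow> {#l#} | Inr _ \<Rightarrow> {#})"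

fun monomial_jderiv :: "(nat \<Rightarrow> nat) \<Rightarrow> 'e \<Rightarrow> 'e monomial \<Rightarrow> 'e monomial list" where
  "monomial_jderiv l h (Monomial r M c) =
     map (\<lambda>s. Monomial r M (c(s := Inr h))) (filter (\<lambda>s. c s = Inl l) [0..<r])"

definition poly_jderiv :: "(nat \<Rightarrow> nat) \<Rightarrow> 'e \<Rightarrow> 'e monomial list \<Rightarrow> 'e monomial list" where
  "poly_jderiv l h ms = concat (map (monomial_jderiv l h) ms)"

fun poly_jderivs :: "((nat \<Rightarrow> nat) \<times> 'e) list \<Rightarrow> 'e monomial list \<Rightarrow> 'e monomial list" where
  "poly_jderivs [] ms = ms"
| "poly_jderivs ((l, h) # xs) ms = poly_jderiv l h (poly_jderivs xs ms)"

lemma eval_poly_Cons: "eval_poly (m # ms) \<phi> = eval_monomial m \<phi> + eval_poly ms \<phi>"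
  by (simp add: eval_poly_def)

lemma eval_poly_append: "eval_poly (ms @ ms') \<phi> = eval_poly ms \<phi> + eval_poly ms' \<phi>"
  by (simp add: eval_poly_def)

lemma eval_monomial_has_vector_derivative:
  fixes \<phi> :: "'e::real_normed_vector jet"
  assumes "multilinear_monomial m"
  shows "((\<lambda>t. eval_monomial m (\<phi>(l := \<phi> l + t *\<^sub>R h)))
           has_vector_derivative eval_poly (monomial_jderiv l h m) \<phi>) (at 0)"
proof -
  obtain r M c where m: "m = Monomial r M c" by (cases m)
  with assms have ml: "multilin r M" by simp
  define S where "S = {s. s < r \<and> c s = Inl l}"
  define w where "w = slot_values c \<phi>"
  have "eval_monomial m (\<phi>(l := \<phi> l + t *\<^sub>R h)) = M (\<lambda>s. if s \<in> S then w s + t *\<^sub>R h else w s)"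
    for t
  proof -
    have "\<forall>s<r. slot_values c (\<phi>(l := \<phi> l + t *\<^sub>R h)) s = (if s \<in> S then w s + t *\<^sub>R h else w s)"
      by (auto simp: S_def w_def slot_values_def split: sum.split)
    then show ?thesis using ml m unfolding multilin_def by simp
  qed
  moreover have "eval_poly (monomial_jderiv l h m) \<phi> = (\<Sum>s\<in>S. M (w(s := h)))"
  proof -
    have "eval_poly (monomial_jderiv l h m) \<phi>
        = (\<Sum>s\<leftarrow>filter (\<lambda>s. c s = Inl l) [0..<r]. M (slot_values (c(s := Inr h)) \<phi>))"
      by (simp add: m eval_poly_def o_def)
    also have "\<dots> = (\<Sum>s\<in>S. M (slot_values (c(s := Inr h)) \<phi>))"
      by (subst sum_list_distinct_conv_sum_set) (auto simp: S_def intro: sum.cong)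
    also have "\<dots> = (\<Sum>s\<in>S. M (w(s := h)))"
      by (intro sum.cong refl arg_cong[where f = M]) (auto simp: w_def slot_values_def)
    finally show ?thesis .
  qed
  moreover have "finite S" "S \<subseteq> {..<r}" by (auto simp: S_def)
  ultimately show ?thesis
    using multilin_has_vector_derivative[OF ml] by simp
qed

lemma eval_poly_has_vector_derivative:
  fixes \<phi> :: "'e::real_normed_vector jet"
  assumes "\<forall>m\<in>set ms. multilinear_monomial m"
  shows "((\<lambda>t. eval_poly ms (\<phi>(l := \<phi> l + t *\<^sub>R h)))
           has_vector_derivative eval_poly (poly_jderiv l h ms) \<phi>) (at 0)"
  using assms
proof (induction ms)
  case Nil
  then show ?case by (simp add: eval_poly_def poly_jderiv_def)
next
  case (Cons m ms)
  have "((\<lambda>t. eval_monomial m (\<phi>(l := \<phi> l + t *\<^sub>R h)) + eval_poly ms (\<phi>(l := \<phi> l + t *\<^sub>R h)))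
      has_vector_derivative eval_poly (monomial_jderiv l h m) \<phi> + eval_poly (poly_jderiv l h ms) \<phi>) (at 0)"
    using Cons by (intro has_vector_derivative_add eval_monomial_has_vector_derivative Cons.IH) auto
  moreover have "eval_poly (poly_jderiv l h (m # ms)) \<phi>
      = eval_poly (monomial_jderiv l h m) \<phi> + eval_poly (poly_jderiv l h ms) \<phi>"
    by (simp add: poly_jderiv_def eval_poly_append)
  ultimately show ?case by (simp only: eval_poly_Cons)
qed

lemma multilinear_poly_jderivs:
  "\<forall>m\<in>set ms. multilinear_monomial m \<Longrightarrow> \<forall>m\<in>set (poly_jderivs xs ms). multilinear_monomial m"
proof (induction xs ms rule: poly_jderivs.induct)
  case (2 l h xs ms)
  have "multilinear_monomial m'" if "m' \<in> set (monomial_jderiv l h m)" "multilinear_monomial m" for m m'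
    using that by (cases m) auto
  with 2 show ?case by (auto simp: poly_jderiv_def)
qed simp

lemma jderivs_eval_poly:
  assumes "\<forall>m\<in>set ms. multilinear_monomial m"
  shows "jderivs xs (eval_poly ms) = eval_poly (poly_jderivs xs ms)"
  using assms
proof (induction xs ms rule: poly_jderivs.induct)
  case (2 l h xs ms)
  then show ?case
    by (auto simp: jderiv_def vector_derivative_at[OF eval_poly_has_vector_derivative]
        multilinear_poly_jderivs)
qed simp

lemma monomial_vars_jderiv:
  assumes "m' \<in> set (monomial_jderiv l h m)"
  shows "monomial_vars m = add_mset l (monomial_vars m')"
proof -
  obtain r M c where m: "m = Monomial r M c" by (cases m)
  then obtain s where s: "s < r" "c s = Inl l" "m' = Monomial r M (c(s := Inr h))"
    using assms by auto
  define v :: "(nat \<Rightarrow> (nat \<Rightarrow> nat) + 'a) \<Rightarrow> nat \<Rightarrow> (nat \<Rightarrow> nat) multiset"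
    where "v c' s' = (case c' s' of Inl l \<Rightarrow> {#l#} | Inr _ \<Rightarrow> {#})" for c' s'
  have "monomial_vars m = v c s + (\<Sum>s'\<in>{..<r} - {s}. v c s')"
    using s by (simp add: m v_def sum.remove)
  moreover have "monomial_vars m' = v (c(s := Inr h)) s + (\<Sum>s'\<in>{..<r} - {s}. v c s')"
    using s by (simp add: v_def sum.remove)
  ultimately show ?thesis using s by (simp add: v_def)
qed

lemma monomial_vars_jderivs:
  "m' \<in> set (poly_jderivs xs ms) \<Longrightarrow> \<exists>m\<in>set ms. monomial_vars m = monomial_vars m' + mset (map fst xs)"
proof (induction xs ms arbitrary: m' rule: poly_jderivs.induct)
  case (2 l h xs ms)
  then obtain m'' where "m'' \<in> set (poly_jderivs xs ms)" "m' \<in> set (monomial_jderiv l h m'')"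
    by (auto simp: poly_jderiv_def)
  with 2 monomial_vars_jderiv show ?case by fastforce
qed auto

lemma jderivs_eval_poly_nonzero:
  assumes "\<forall>m\<in>set ms. multilinear_monomial m" and "jderivs xs (eval_poly ms) \<phi> \<noteq> 0"
  shows "\<exists>m\<in>set ms. mset (map fst xs) \<subseteq># monomial_vars m"
proof -
  have "poly_jderivs xs ms \<noteq> []"
    using assms by (auto simp: jderivs_eval_poly eval_poly_def)
  then obtain m' where "m' \<in> set (poly_jderivs xs ms)" by (meson list.set_sel(1))
  then show ?thesis by (metis monomial_vars_jderivs mset_subset_eq_add_right)
qed

definition low_degree_labels :: "nat \<Rightarrow> nat \<Rightarrow> (nat \<Rightarrow> nat) multiset \<Rightarrow> bool" where
  "low_degree_labels d D K \<longleftrightarrow> (\<forall>k\<in>#K. sdeg d k \<le> 1) \<and> size {#k\<in>#K. sdeg d k = 1#} \<le> D"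

lemma low_degree_labels_subset:
  assumes "K \<subseteq># K'" and "low_degree_labels d D K'"
  shows "low_degree_labels d D K"
proof -
  have "size {#k\<in>#K. sdeg d k = 1#} \<le> size {#k\<in>#K'. sdeg d k = 1#}"
    using assms(1) by (intro size_mset_mono multiset_filter_mono)
  with assms show ?thesis
    unfolding low_degree_labels_def by (meson dual_order.trans mset_subset_eqD)
qed

lemma sdeg_zidx [simp]: "sdeg d zidx = 0"
  by (simp add: sdeg_def zidx_def)

lemma low_degree_labels_zidx:
  assumes "\<forall>k\<in>#K. k = zidx"
  shows "low_degree_labels d D K"
proof -
  have deg: "\<forall>k\<in>#K. sdeg d k = 0"
    using assms by auto
  then have "{#k\<in>#K. sdeg d k = 1#} = {#}"
    by simp
  with deg show ?thesis unfolding low_degree_labels_def by (metis le0 size_empty)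
qed

lemma sum_lessThan_singleton_mset: "(\<Sum>s<r. {#x#}) = replicate_mset r x"
  by (induction r) auto

lemma grad_multilin_sum_directions:
  assumes "grad_multilin d q B"
  shows "B a v = (\<Sum>i\<in>{1..<d}. B (\<lambda>m. if m = i then a i else 0) v)"
proof -
  have add: "\<And>a b. B (\<lambda>i. a i + b i) v = B a v + B b v"
    and dep: "\<And>a b. (\<forall>i\<in>{1..<d}. a i = b i) \<Longrightarrow> B a v = B b v"
    and scale: "\<And>c a. B (\<lambda>i. c *\<^sub>R a i) v = c *\<^sub>R B a v"
    using assms unfolding grad_multilin_def by blast+
  have zero: "B (\<lambda>_. 0) v = 0"
    using scale[of 0 "\<lambda>_. 0"] by simp
  have sum: "finite A \<Longrightarrow> B (\<lambda>m. \<Sum>i\<in>A. g i m) v = (\<Sum>i\<in>A. B (g i) v)" for A :: "nat set" and g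
    by (induction A rule: finite_induct) (simp_all add: zero add)
  have "B a v = B (\<lambda>m. \<Sum>i\<in>{1..<d}. if m = i then a i else 0) v"
    by (rule dep) auto
  also have "\<dots> = (\<Sum>i\<in>{1..<d}. B (\<lambda>m. if m = i then a i else 0) v)"
    by (rule sum) simp
  finally show ?thesis .
qed

definition grad_direction_form ::
    "((nat \<Rightarrow> 'e::real_vector) \<Rightarrow> (nat \<Rightarrow> 'e) \<Rightarrow> 'e) \<Rightarrow> nat \<Rightarrow> (nat \<Rightarrow> 'e) \<Rightarrow> 'e" where
  "grad_direction_form B i v = B (\<lambda>m. if m = i then v 0 else 0) (\<lambda>s. v (Suc s))"

lemma multilin_grad_direction_form:
  assumes "grad_multilin d q B"
  shows "multilin (Suc q) (grad_direction_form B i)"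
  unfolding multilin_def
proof (intro conjI allI impI)
  have add: "\<And>a b v. B (\<lambda>i. a i + b i) v = B a v + B b v"
    and scale: "\<And>c a v. B (\<lambda>i. c *\<^sub>R a i) v = c *\<^sub>R B a v"
    and ml: "\<And>a. multilin q (B a)"
    using assms unfolding grad_multilin_def by blast+
  show "grad_direction_form B i v = grad_direction_form B i w" if "\<forall>j<Suc q. v j = w j" for v w
  proof -
    have "(\<lambda>m. if m = i then v 0 else 0) = (\<lambda>m. if m = i then w 0 else 0)"
      using that by auto
    moreover have "\<forall>j<q. v (Suc j) = w (Suc j)" using that by auto
    ultimately show ?thesis using ml unfolding grad_direction_form_def multilin_def by metis
  qed
  show "linear (\<lambda>x. grad_direction_form B i (v(j := x)))" if "j < Suc q" for j v
  proof (cases j)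
    case 0
    have tail: "(\<lambda>s. (v(0 := x)) (Suc s)) = (\<lambda>s. v (Suc s))" for x by auto
    show ?thesis
      unfolding 0 grad_direction_form_def tail
      using add[of "\<lambda>m. if m = i then _ else 0" "\<lambda>m. if m = i then _ else 0"]
        scale[of _ "\<lambda>m. if m = i then _ else 0"]
      by (intro linearI) (simp_all add: if_distrib cong: if_cong)
  next
    case (Suc j')
    have tail: "(\<lambda>s. (v(Suc j' := x)) (Suc s)) = (\<lambda>s. v (Suc s))(j' := x)" for x by auto
    have head: "(v(Suc j' := x)) 0 = v 0" for x by simp
    show ?thesis
      unfolding Suc grad_direction_form_def tail head
      using ml that Suc unfolding multilin_def by simp
  qed
qed

definition power_monomial :: "nat \<Rightarrow> ((nat \<Rightarrow> 'e) \<Rightarrow> 'e) \<Rightarrow> 'e monomial" where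
  "power_monomial p F = Monomial p F (\<lambda>_. Inl zidx)"

definition grad_monomial ::
    "nat \<Rightarrow> ((nat \<Rightarrow> 'e::real_vector) \<Rightarrow> (nat \<Rightarrow> 'e) \<Rightarrow> 'e) \<Rightarrow> nat \<Rightarrow> 'e monomial" where
  "grad_monomial q B i =
     Monomial (Suc q) (grad_direction_form B i) (\<lambda>s. if s = 0 then Inl (uidx i) else Inl zidx)"

lemma eval_power_monomial: "eval_monomial (power_monomial p F) \<phi> = F (\<lambda>_. \<phi> zidx)"
  by (simp add: power_monomial_def slot_values_def[abs_def])

lemma multilinear_power_monomial: "multilinear_monomial (power_monomial p F) \<longleftrightarrow> multilin p F"
  by (simp add: power_monomial_def)

lemma low_degree_labels_power_monomial: "low_degree_labels d D (monomial_vars (power_monomial p F))"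
  by (simp add: power_monomial_def sum_lessThan_singleton_mset low_degree_labels_zidx)

lemma eval_grad_monomial:
  "eval_monomial (grad_monomial q B i) \<phi> = B (\<lambda>m. if m = i then \<phi> (uidx i) else 0) (\<lambda>_. \<phi> zidx)"
proof -
  have "slot_values (\<lambda>s. if s = 0 then Inl (uidx i) else Inl zidx) \<phi>
      = (\<lambda>s. if s = 0 then \<phi> (uidx i) else \<phi> zidx)"
    by (auto simp: slot_values_def)
  then show ?thesis by (simp add: grad_monomial_def grad_direction_form_def)
qed

lemma eval_poly_grad_monomials:
  assumes "grad_multilin d q B"
  shows "eval_poly (map (grad_monomial q B) [1..<d]) \<phi> = B (\<lambda>i. \<phi> (uidx i)) (\<lambda>_. \<phi> zidx)"
proof -
  have "eval_poly (map (grad_monomial q B) [1..<d]) \<phi>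
      = (\<Sum>i\<in>{1..<d}. B (\<lambda>m. if m = i then \<phi> (uidx i) else 0) (\<lambda>_. \<phi> zidx))"
    by (simp add: eval_poly_def eval_grad_monomial o_def sum_list_distinct_conv_sum_set)
  also have "\<dots> = B (\<lambda>i. \<phi> (uidx i)) (\<lambda>_. \<phi> zidx)"
    by (rule grad_multilin_sum_directions[OF assms, symmetric])
  finally show ?thesis .
qed

lemma multilinear_grad_monomial:
  "grad_multilin d q B \<Longrightarrow> multilinear_monomial (grad_monomial q B i)"
  by (simp add: grad_monomial_def multilin_grad_direction_form)

lemma low_degree_labels_grad_monomial:
  assumes "i \<in> {1..<d}"
  shows "low_degree_labels d 1 (monomial_vars (grad_monomial q B i))"
proof -
  have "monomial_vars (grad_monomial q B i) = add_mset (uidx i) (replicate_mset q zidx)"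
    unfolding grad_monomial_def monomial_vars.simps sum.lessThan_Suc_shift
    by (simp add: sum_lessThan_singleton_mset)
  moreover have "sdeg d (uidx i) = 1" using assms by (simp add: sdeg_def uidx_def)
  moreover have "low_degree_labels d 0 (replicate_mset q zidx)"
    by (simp add: low_degree_labels_zidx)
  ultimately show ?thesis by (simp add: low_degree_labels_def)
qed

lemma admissible_P_eq_eval_poly:
  fixes P :: "'e::real_normed_vector jet \<Rightarrow> 'e"
  assumes "admissible_P d p P"
  obtains ms where "\<forall>m\<in>set ms. multilinear_monomial m \<and> low_degree_labels d 1 (monomial_vars m)"
    and "P = eval_poly ms"
proof -
  obtain F where F: "multilin p F" and P_cases: "(\<forall>\<phi>. P \<phi> = F (\<lambda>_. \<phi> zidx)) \<or>
      (odd p \<and> (\<exists>B. grad_multilin d ((p - 1) div 2) B \<and>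
         (\<forall>\<phi>. P \<phi> = F (\<lambda>_. \<phi> zidx) + B (\<lambda>i. \<phi> (uidx i)) (\<lambda>_. \<phi> zidx))))"
    using assms unfolding admissible_P_def by blast
  from P_cases show thesis
  proof
    assume "\<forall>\<phi>. P \<phi> = F (\<lambda>_. \<phi> zidx)"
    then have "P = eval_poly [power_monomial p F]"
      by (auto simp: eval_poly_def eval_power_monomial)
    with F show thesis
      by (intro that) (auto simp: multilinear_power_monomial low_degree_labels_power_monomial)
  next
    assume "odd p \<and> (\<exists>B. grad_multilin d ((p - 1) div 2) B \<and>
      (\<forall>\<phi>. P \<phi> = F (\<lambda>_. \<phi> zidx) + B (\<lambda>i. \<phi> (uidx i)) (\<lambda>_. \<phi> zidx)))"
    then obtain q B where B: "grad_multilin d q B"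
      and P_eq: "\<And>\<phi>. P \<phi> = F (\<lambda>_. \<phi> zidx) + B (\<lambda>i. \<phi> (uidx i)) (\<lambda>_. \<phi> zidx)"
      by blast
    have "P = eval_poly (power_monomial p F # map (grad_monomial q B) [1..<d])"
      using eval_poly_grad_monomials[OF B] by (auto simp: P_eq eval_poly_Cons eval_power_monomial)
    moreover have "multilinear_monomial m \<and> low_degree_labels d 1 (monomial_vars m)"
      if "m \<in> set (map (grad_monomial q B) [1..<d])" for m
    proof -
      from that obtain i where "i \<in> {1..<d}" and "m = grad_monomial q B i" by auto
      then show ?thesis using B multilinear_grad_monomial low_degree_labels_grad_monomial by blast
    qed
    ultimately show thesis
      using F by (intro that) (auto simp: multilinear_power_monomial low_degree_labels_power_monomial)
  qed
qed

lemma low_degree_labels_Dk_nonzero: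
  fixes P :: "'e::real_normed_vector jet \<Rightarrow> 'e"
  assumes "admissible_P d p P" and "Dk_nonzero K P"
  shows "low_degree_labels d 1 K"
proof -
  obtain ms where ms: "\<forall>m\<in>set ms. multilinear_monomial m \<and> low_degree_labels d 1 (monomial_vars m)"
    and P: "P = eval_poly ms"
    using admissible_P_eq_eval_poly[OF assms(1)] by blast
  obtain xs \<phi> where K: "mset (map fst xs) = K" and "jderivs xs P \<phi> \<noteq> 0"
    using assms(2) unfolding Dk_nonzero_def by blast
  then obtain m where "m \<in> set ms" "K \<subseteq># monomial_vars m"
    using jderivs_eval_poly_nonzero ms P by blast
  with ms show ?thesis using low_degree_labels_subset by blast
qed

definition low_degree_rules :: "nat \<Rightarrow> (nat \<Rightarrow> (nat \<Rightarrow> nat) multiset set) \<Rightarrow> bool" where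
  "low_degree_rules d R \<longleftrightarrow> (\<forall>j K. K \<in> R j \<longrightarrow> low_degree_labels d (if j = 0 then 1 else 0) K)"

lemma low_degree_rules_rules:
  fixes P :: "'e::real_normed_vector jet \<Rightarrow> 'e"
  assumes "admissible_P d p P" and "f_indep_grad n f"
  shows "low_degree_rules d (rules d n f P)"
  using assms low_degree_labels_Dk_nonzero low_degree_labels_zidx
  by (auto simp: low_degree_rules_def rules_def)

primrec noise_count :: "tree \<Rightarrow> nat" where
  "noise_count (Node k j ch) = (if j = 0 then 0 else 1)
     + sum_mset (image_mset snd (image_mset (map_prod id noise_count) ch))"

primrec count0_without_grad :: "nat \<Rightarrow> tree \<Rightarrow> nat" where
  "count0_without_grad d (Node k j ch) = (if j = 0 \<and> size {#x\<in>#ch. sdeg d (fst x) = 1#} = 0 then 1 else 0)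
     + sum_mset (image_mset snd (image_mset (map_prod id (count0_without_grad d)) ch))"

lemma image_mset_snd_map_prod:
  "image_mset snd (image_mset (map_prod id g) ch) = image_mset (\<lambda>x. g (snd x)) ch"
  by (simp add: multiset.map_comp o_def)

lemma hom_Node:
  "hom d \<beta> (Node k j ch) = real (sdeg d k) + (if j = 0 then 0 else \<beta>)
     + (\<Sum>x\<in>#ch. hom d \<beta> (snd x) + 2 - real (sdeg d (fst x)))"
  by (simp add: multiset.map_comp o_def case_prod_beta)

lemma sum_mset_edges_lower_bound:
  fixes a b :: "'a \<Rightarrow> real" and s :: "'a \<Rightarrow> nat"
  assumes "\<forall>x\<in>#ch. b x - 2 \<le> a x" and "\<forall>x\<in>#ch. s x \<le> 1"
  shows "(\<Sum>x\<in>#ch. b x) - real (size {#x\<in>#ch. s x = 1#}) \<le> (\<Sum>x\<in>#ch. a x + 2 - real (s x))"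
  using assms
proof (induction ch)
  case (add x ch)
  then have "s x = 0 \<or> s x = 1" by auto
  with add show ?case by auto
qed simp

text \<open>Charge the 2 of each edge to its lower vertex (the root is short by 2) and its -sdeg l to its
  upper vertex.  A noise vertex then gets \<beta> + 2; a label-0 vertex, having no outgoing edge of degree
  2 or more and at most one of degree 1, gets at least 1, and 2 if it has none of degree 1.\<close>

lemma hom_lower_bound:
  fixes \<beta> :: real
  assumes "low_degree_rules d R" and "conforming d n R t"
  shows "(\<beta> + 2) * noise_count t + count0 t + count0_without_grad d t - 2 \<le> hom d \<beta> t"
  using assms(2)
proof (induction rule: conforming.induct)
  case (1 k j ch)
  define L where "L t = (\<beta> + 2) * noise_count t + count0 t + count0_without_grad d t" for t
  define a where "a = size {#x\<in>#ch. sdeg d (fst x) = 1#}"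
  have "low_degree_labels d (if j = 0 then 1 else 0) (image_mset fst ch)"
    using assms(1) "1.hyps" unfolding low_degree_rules_def by blast
  then have deg: "\<forall>x\<in>#ch. sdeg d (fst x) \<le> 1" and a: "a \<le> (if j = 0 then 1 else 0)"
    by (auto simp: low_degree_labels_def a_def filter_mset_image_mset)
  have "\<forall>x\<in>#ch. L (snd x) - 2 \<le> hom d \<beta> (snd x)"
    using "1" unfolding L_def by blast
  then have "(\<Sum>x\<in>#ch. L (snd x)) - a \<le> (\<Sum>x\<in>#ch. hom d \<beta> (snd x) + 2 - real (sdeg d (fst x)))"
    unfolding a_def using deg by (rule sum_mset_edges_lower_bound)
  moreover have "L (Node k j ch) = (\<beta> + 2) * (if j = 0 then 0 else 1) + (if j = 0 then 1 else 0)
      + (if j = 0 \<and> a = 0 then 1 else 0) + (\<Sum>x\<in>#ch. L (snd x))"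
  proof -
    have "real (noise_count (Node k j ch))
        = (if j = 0 then 0 else 1) + (\<Sum>x\<in>#ch. real (noise_count (snd x)))"
      and "real (count0 (Node k j ch)) = (if j = 0 then 1 else 0) + (\<Sum>x\<in>#ch. real (count0 (snd x)))"
      and "real (count0_without_grad d (Node k j ch))
        = (if j = 0 \<and> a = 0 then 1 else 0) + (\<Sum>x\<in>#ch. real (count0_without_grad d (snd x)))"
      by (auto simp: a_def image_mset_snd_map_prod of_nat_sum_mset multiset.map_comp o_def)
    then show ?thesis
      by (simp add: L_def sum_mset.distrib sum_mset_distrib_left algebra_simps)
  qed
  ultimately show ?case
    using a unfolding hom_Node L_def[symmetric] by (auto split: if_splits)
qed

lemma sum_mset_le_of_mem: "x \<in># M \<Longrightarrow> (g x :: nat) \<le> (\<Sum>y\<in>#M. g y)"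
  by (metis le_add1 multi_member_split image_mset_add_mset sum_mset.add_mset)

lemma le_of_is_vertex:
  fixes g :: "tree \<Rightarrow> nat"
  assumes child: "\<And>k j ch x. x \<in># ch \<Longrightarrow> g (snd x) \<le> g (Node k j ch)" and "is_vertex s t"
  shows "g s \<le> g t"
  using assms(2) by induction (auto intro: order_trans child)

lemma count0_le_of_is_vertex: "is_vertex s t \<Longrightarrow> count0 s \<le> count0 t"
proof (rule le_of_is_vertex)
  fix k j ch and x :: "(nat \<Rightarrow> nat) \<times> tree"
  assume "x \<in># ch"
  then have "count0 (snd x) \<le> (\<Sum>y\<in>#ch. count0 (snd y))" by (rule sum_mset_le_of_mem)
  then show "count0 (snd x) \<le> count0 (Node k j ch)" by (simp add: image_mset_snd_map_prod)
qed

lemma count0_without_grad_le_of_is_vertex: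
  "is_vertex s t \<Longrightarrow> count0_without_grad d s \<le> count0_without_grad d t"
proof (rule le_of_is_vertex)
  fix k j ch and x :: "(nat \<Rightarrow> nat) \<times> tree"
  assume "x \<in># ch"
  then have "count0_without_grad d (snd x) \<le> (\<Sum>y\<in>#ch. count0_without_grad d (snd y))"
    by (rule sum_mset_le_of_mem)
  then show "count0_without_grad d (snd x) \<le> count0_without_grad d (Node k j ch)"
    by (simp add: image_mset_snd_map_prod)
qed

lemma conforming_of_is_vertex: "is_vertex s t \<Longrightarrow> conforming d n R t \<Longrightarrow> conforming d n R s"
  by (induction rule: is_vertex.induct) (auto elim: conforming.cases)

lemma is_vertex_of_nonroot_vertex: "nonroot_vertex s t \<Longrightarrow> is_vertex s t"
  by (induction rule: nonroot_vertex.induct) (auto intro: is_vertex.intros)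

lemma noise_count_eq_0:
  "noise_count t = 0 \<Longrightarrow> (\<exists>k. t = Node k 0 {#}) \<or> (\<exists>k. nonroot_vertex (Node k 0 {#}) t)"
proof (induction t)
  case (Node k j ch)
  show ?case
  proof (cases "ch = {#}")
    case False
    then obtain x where x: "x \<in># ch" by blast
    moreover have "snd x \<in> Basic_BNFs.snds x" by (cases x) (simp add: prod_set_simps)
    moreover have "noise_count (snd x) = 0"
      using Node.prems x by (auto simp: image_mset_snd_map_prod)
    ultimately obtain k' where "is_vertex (Node k' 0 {#}) (snd x)"
      using Node.IH by (metis is_vertex.intros(1) is_vertex_of_nonroot_vertex)
    with x show ?thesis by (auto intro: nonroot_vertex.intros)
  qed (use Node.prems in \<open>auto split: if_splits\<close>)
qed

lemma noise_count_pos: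
  assumes "no_poly_leaves t" and "hom d \<beta> t < 0"
  shows "1 \<le> noise_count t"
proof (rule ccontr)
  assume "\<not> 1 \<le> noise_count t"
  then have "noise_count t = 0" by simp
  from noise_count_eq_0[OF this] show False
    using assms by (auto simp: no_poly_leaves_def)
qed

lemma count0_add_count0_without_grad_le_1:
  fixes \<beta> :: real
  assumes "low_degree_rules d R" and "conforming d n R t" and "no_poly_leaves t" and "-2 < \<beta>" and "hom d \<beta> t < 0"
  shows "count0 t + count0_without_grad d t \<le> 1"
proof -
  have "1 \<le> noise_count t" using assms(3,5) by (rule noise_count_pos)
  then have "\<beta> + 2 \<le> (\<beta> + 2) * noise_count t" using assms(4) by simp
  moreover have "(\<beta> + 2) * noise_count t + count0 t + count0_without_grad d t - 2 \<le> hom d \<beta> t"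
    using assms(1,2) by (rule hom_lower_bound)
  ultimately have "real (count0 t + count0_without_grad d t) < 2" using assms(4,5) by linarith
  then show ?thesis by linarith
qed

lemma grad_edges_eq_1:
  assumes "low_degree_rules d R" and "conforming d n R t" and "count0_without_grad d t = 0" and "is_vertex (Node k 0 ch) t"
  shows "size {#x\<in>#ch. sdeg d (fst x) = 1#} = 1"
proof -
  have "conforming d n R (Node k 0 ch)"
    using assms(2,4) conforming_of_is_vertex by blast
  then have "low_degree_labels d 1 (image_mset fst ch)"
    using assms(1) unfolding low_degree_rules_def by (fastforce elim: conforming.cases)
  then have "size {#x\<in>#ch. sdeg d (fst x) = 1#} \<le> 1"
    by (simp add: low_degree_labels_def filter_mset_image_mset)
  moreover have "count0_without_grad d (Node k 0 ch) = 0"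
    using count0_without_grad_le_of_is_vertex[OF assms(4), of d] assms(3) by simp
  then have "size {#x\<in>#ch. sdeg d (fst x) = 1#} \<noteq> 0"
    by (simp del: size_eq_0_iff_empty split: if_split_asm)
  ultimately show ?thesis by linarith
qed

theorem lemma6:
  fixes d n p :: nat and \<beta> :: real
    and f :: "nat \<Rightarrow> 'e::real_normed_vector jet \<Rightarrow> 'e"
    and P :: "'e jet \<Rightarrow> 'e"
    and \<tau> :: tree
  assumes "d \<ge> 2" and "n \<ge> 1"
    and "\<exists>S::'e set. finite S \<and> span S = UNIV"
    and "admissible_P d p P"
    and "\<forall>i\<in>{1..n}. jet_fun d (f i)"
    and "\<forall>i\<in>{1..n}. smooth (\<lambda>x::'e. f i (\<lambda>k. if k = zidx then x else 0))"
    and "\<not> f_constant n f" and "f_indep_grad n f"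
    and "-2 < \<beta>" and "\<beta> < 0"
    and "\<tau> \<in> W_neg d n f P \<beta>"
  shows "count0 \<tau> \<le> 1 \<and>
    (\<forall>k ch. is_vertex (Node k 0 ch) \<tau> \<longrightarrow> size {# x \<in># ch. sdeg d (fst x) = 1 #} = 1)"
proof -
  have rules: "low_degree_rules d (rules d n f P)"
    using assms(4,8) by (rule low_degree_rules_rules)
  have conf: "conforming d n (rules d n f P) \<tau>" and "no_poly_leaves \<tau>" and "hom d \<beta> \<tau> < 0"
    using assms(11) by (auto simp: W_neg_def)
  then have count: "count0 \<tau> + count0_without_grad d \<tau> \<le> 1"
    using rules assms(9) count0_add_count0_without_grad_le_1 by blast
  have "size {#x\<in>#ch. sdeg d (fst x) = 1#} = 1" if "is_vertex (Node k 0 ch) \<tau>" for k ch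
  proof -
    have "1 \<le> count0 \<tau>" using count0_le_of_is_vertex[OF that] by simp
    then have "count0_without_grad d \<tau> = 0" using count by simp
    then show ?thesis using grad_edges_eq_1 rules conf that by blast
  qed
  with count show ?thesis by simp
qed

end
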